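(* Let $\beta\in(0,1)$, $T>0$, and let $t_j=j\kappa$, $j=0,\dots,N$, be a uniform mesh of $[0,T]$ with $\kappa=T/N$. Let $u\in C^2[0,T]$ be real-valued, let $\hat u$ be the continuous piecewise linear interpolant of the values $u(t_j)$, and let $\Pi_1$ denote continuous piecewise linear interpolation at the nodes $t_j$. Then there is a constant $C$ independent of $\kappa$ and $t$ such that for $t\in(\kappa,T]$ \[ \int_0^t(t-\tau)^{\beta-1}\left|\Pi_1D_t^\beta\hat u(\tau)-D_t^\beta\hat u(\tau)\right|\,d\tau\leq C\kappa^{2-\beta}(t-\kappa)^{\beta-1}. \]
   Context: $D_t^\beta$ is the Caputo fractional derivative: $D_t^\beta g(t)=\frac{1}{\Gamma(1-\beta)}\int_0^t (t-\tau)^{-\beta} g'(\tau)\,d\tau$; $\Pi_1D_t^\beta\hat u$ is the piecewise linear interpolant of the continuous function $D_t^\beta\hat u$ at the mesh nodes. *)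

theory Defs
  imports "HOL-Analysis.Analysis"
begin

text \<open>Continuous piecewise linear interpolant of g at the uniform nodes
  t_j = j * kappa, j = 0..N (meaningful on [0, N*kappa], N >= 1).\<close>
definition pl_interp :: "real \<Rightarrow> nat \<Rightarrow> (real \<Rightarrow> real) \<Rightarrow> real \<Rightarrow> real" where
  "pl_interp kappa N g t =
     (let j = min (nat \<lfloor>t / kappa\<rfloor>) (N - 1)
      in g (real j * kappa) + (t - real j * kappa) / kappa *
           (g (real (Suc j) * kappa) - g (real j * kappa)))"

definition caputo :: "real \<Rightarrow> (real \<Rightarrow> real) \<Rightarrow> real \<Rightarrow> real" where
  "caputo beta g t =
     (1 / Gamma (1 - beta)) * integral {0..t} (\<lambda>\<tau>. (t - \<tau>) powr (- beta) * deriv g \<tau>)"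

end

theory Submission
  imports Defs
begin

text \<open>
  The derivative of the interpolant of \<open>u\<close> is a step function whose jumps \<open>pl_jump \<kappa> u j\<close>
  at the nodes are bounded by \<open>sup |u'|\<close> for \<open>j = 0\<close> and, as \<open>u\<close> is \<open>C\<^sup>2\<close>, by
  \<open>O(\<kappa>)\<close> for \<open>j > 0\<close>. So its Caputo derivative is a combination of shifted copies of the
  concave ramp \<open>max x 0 powr (1 - \<beta>) / (1 - \<beta>)\<close>, and the interpolation error of the Caputo
  derivative is the same combination of the interpolation errors of the ramps. On a cell at distance
  \<open>a > 0\<close> beyond the kink this error is at most \<open>\<kappa> (a powr -\<beta> - (a + \<kappa>) powr -\<beta>)\<close>,
  which telescopes over the cells to \<open>O(\<kappa> powr (1 - \<beta>))\<close>. Hence the jumps with \<open>j > 0\<close>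
  contribute \<open>O(\<kappa> powr (2 - \<beta>))\<close> pointwise, and the first jump contributes
  \<open>O(\<kappa>\<^sup>2 max \<tau> \<kappa> powr (-1 - \<beta>))\<close>. Integrating these bounds against the weakly
  singular kernel \<open>(t - \<tau>) powr (\<beta> - 1)\<close> gives \<open>O(\<kappa> powr (2 - \<beta>) (t - \<kappa>) powr (\<beta> - 1))\<close>.
\<close>

lemma has_integral_diff_powr:
  fixes a b c \<gamma> :: real
  assumes "0 < \<gamma>" "a \<le> b" "b \<le> c"
  shows "((\<lambda>\<sigma>. (c - \<sigma>) powr (\<gamma> - 1)) has_integral ((c - a) powr \<gamma> - (c - b) powr \<gamma>) / \<gamma>) {a..b}"
proof -
  define F where "F \<sigma> = - ((c - \<sigma>) powr \<gamma>) / \<gamma>" for \<sigma>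
  have "((\<lambda>\<sigma>. (c - \<sigma>) powr (\<gamma> - 1)) has_integral F b - F a) {a..b}"
  proof (rule fundamental_theorem_of_calculus_interior[OF assms(2)])
    show "continuous_on {a..b} F"
      unfolding F_def using assms by (intro continuous_intros continuous_on_powr') auto
    fix x assume "x \<in> {a<..<b}"
    then have "(F has_real_derivative (c - x) powr (\<gamma> - 1)) (at x)"
      unfolding F_def using assms by (auto intro!: derivative_eq_intros)
    then show "(F has_vector_derivative (c - x) powr (\<gamma> - 1)) (at x)"
      by (simp add: has_real_derivative_iff_has_vector_derivative)
  qed
  then show ?thesis by (simp add: F_def diff_divide_distrib)
qed

lemma has_integral_powr_neg:
  fixes a b \<beta> :: real
  assumes "0 < \<beta>" "0 < a" "a \<le> b"
  shows "((\<lambda>\<sigma>. \<sigma> powr (- 1 - \<beta>)) has_integral (a powr (- \<beta>) - b powr (- \<beta>)) / \<beta>) {a..b}"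
proof -
  define F where "F \<sigma> = - (\<sigma> powr (- \<beta>)) / \<beta>" for \<sigma>
  have "((\<lambda>\<sigma>. \<sigma> powr (- 1 - \<beta>)) has_integral F b - F a) {a..b}"
  proof (rule fundamental_theorem_of_calculus_interior[OF assms(3)])
    show "continuous_on {a..b} F"
      unfolding F_def using assms by (intro continuous_intros) auto
    fix x assume "x \<in> {a<..<b}"
    then have "(F has_real_derivative x powr (- \<beta> - 1)) (at x)"
      unfolding F_def using assms by (auto intro!: derivative_eq_intros)
    moreover have "- \<beta> - 1 = - 1 - \<beta>"
      by simp
    ultimately show "(F has_vector_derivative x powr (- 1 - \<beta>)) (at x)"
      by (simp add: has_real_derivative_iff_has_vector_derivative)
  qed
  then show ?thesis by (simp add: F_def diff_divide_distrib)
qed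

text \<open>If \<open>f\<close> is not integrable, its integral is \<open>0\<close> by convention; hence \<open>0 \<le> I\<close>.\<close>

lemma integral_le_has_integral_nonneg:
  fixes f g :: "'a::euclidean_space \<Rightarrow> real"
  assumes "(g has_integral I) S" "\<And>x. x \<in> S \<Longrightarrow> f x \<le> g x" "0 \<le> I"
  shows "integral S f \<le> I"
proof (cases "f integrable_on S")
  case True
  then show ?thesis
    using has_integral_le[OF integrable_integral[OF True] assms(1,2)] by simp
next
  case False
  then show ?thesis
    using assms(3) by (simp add: not_integrable_integral)
qed

lemma integral_combine3:
  fixes f :: "real \<Rightarrow> real"
  assumes "a \<le> b" "b \<le> c" "c \<le> d" "f integrable_on {a..d}"
  shows "integral {a..d} f = integral {a..b} f + integral {b..c} f + integral {c..d} f"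
proof -
  have "integral {b..c} f + integral {c..d} f = integral {b..d} f"
    using assms by (intro Henstock_Kurzweil_Integration.integral_combine integrable_subinterval_real[OF assms(4)]) auto
  moreover have "integral {a..b} f + integral {b..d} f = integral {a..d} f"
    using assms by (intro Henstock_Kurzweil_Integration.integral_combine) auto
  ultimately show ?thesis
    by simp
qed

lemma abs_sum_mult_le_head_tail:
  fixes w e :: "nat \<Rightarrow> real"
  assumes "0 < N" "\<bar>w 0\<bar> \<le> a" "\<And>j. 0 < j \<Longrightarrow> j < N \<Longrightarrow> \<bar>w j\<bar> \<le> b" "0 \<le> b"
  shows "\<bar>\<Sum>j<N. w j * e j\<bar> \<le> a * \<bar>e 0\<bar> + b * (\<Sum>j<N. \<bar>e j\<bar>)"
proof -
  have "\<bar>\<Sum>j<N. w j * e j\<bar> \<le> (\<Sum>j<N. \<bar>w j\<bar> * \<bar>e j\<bar>)"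
    using sum_abs[of "\<lambda>j. w j * e j"] by (simp add: abs_mult)
  also have "\<dots> \<le> (\<Sum>j<N. (if j = 0 then a * \<bar>e j\<bar> else 0) + b * \<bar>e j\<bar>)"
  proof (rule sum_mono)
    fix j assume "j \<in> {..<N}"
    then have "\<bar>w j\<bar> \<le> (if j = 0 then a else 0) + b"
      using assms by (auto simp: add_increasing2)
    then have "\<bar>w j\<bar> * \<bar>e j\<bar> \<le> ((if j = 0 then a else 0) + b) * \<bar>e j\<bar>"
      by (rule mult_right_mono) simp
    then show "\<bar>w j\<bar> * \<bar>e j\<bar> \<le> (if j = 0 then a * \<bar>e j\<bar> else 0) + b * \<bar>e j\<bar>"
      by (cases "j = 0") (simp_all add: distrib_right)
  qed
  also have "\<dots> = a * \<bar>e 0\<bar> + b * (\<Sum>j<N. \<bar>e j\<bar>)"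
    using assms by (simp add: sum.distrib sum_distrib_left)
  finally show ?thesis .
qed

section \<open>Interpolation errors of the ramp function\<close>

text \<open>\<open>ramp \<beta> (\<tau> - a)\<close> is the integral of \<open>(\<tau> - \<sigma>) powr -\<beta>\<close> over \<open>a < \<sigma> < \<tau>\<close>,
  i.e. for \<open>a \<ge> 0\<close> it is \<open>Gamma (1 - \<beta>)\<close> times the Caputo derivative at \<open>\<tau>\<close> of \<open>max (x - a) 0\<close>.\<close>

definition ramp :: "real \<Rightarrow> real \<Rightarrow> real" where
  "ramp \<beta> x = max x 0 powr (1 - \<beta>) / (1 - \<beta>)"

definition interp_error :: "(real \<Rightarrow> real) \<Rightarrow> real \<Rightarrow> real \<Rightarrow> real \<Rightarrow> real" where
  "interp_error f a h x = f a + x / h * (f (a + h) - f a) - f (a + x)"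

lemma ramp_nonpos [simp]: "x \<le> 0 \<Longrightarrow> ramp \<beta> x = 0"
  by (simp add: ramp_def max_def)

lemma ramp_nonneg: "0 \<le> x \<Longrightarrow> ramp \<beta> x = x powr (1 - \<beta>) / (1 - \<beta>)"
  by (simp add: ramp_def max_def)

lemma interp_error_linear:
  "interp_error (\<lambda>y. c * (\<Sum>j\<in>J. w j * f j y)) a h x = c * (\<Sum>j\<in>J. w j * interp_error (f j) a h x)"
  by (simp add: interp_error_def sum_distrib_left sum_subtractf sum.distrib algebra_simps)

lemma interp_error_shift: "interp_error (\<lambda>y. f (y - b)) a h x = interp_error f (a - b) h x"
  by (simp add: interp_error_def algebra_simps)

lemma interp_error_cong:
  "f a = g a \<Longrightarrow> f (a + h) = g (a + h) \<Longrightarrow> f (a + x) = g (a + x)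
   \<Longrightarrow> interp_error f a h x = interp_error g a h x"
  by (simp add: interp_error_def)

lemma has_real_derivative_ramp:
  assumes "0 < x" "\<beta> < 1"
  shows "(ramp \<beta> has_real_derivative x powr (- \<beta>)) (at x)"
proof -
  have "((\<lambda>y. y powr (1 - \<beta>) / (1 - \<beta>)) has_real_derivative x powr (- \<beta>)) (at x)"
    using assms by (auto intro!: derivative_eq_intros)
  then show ?thesis
    by (rule has_field_derivative_transform_within_open[of _ _ _ "{0<..}"])
       (use assms in \<open>auto simp: ramp_nonneg\<close>)
qed

lemma interp_error_abs_le_antimono_deriv:
  fixes f f' :: "real \<Rightarrow> real"
  assumes "0 < h" "0 \<le> x" "x \<le> h"
    and deriv: "\<And>y. a \<le> y \<Longrightarrow> y \<le> a + h \<Longrightarrow> (f has_real_derivative f' y) (at y)"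
    and antimono: "\<And>y z. a \<le> y \<Longrightarrow> y \<le> z \<Longrightarrow> z \<le> a + h \<Longrightarrow> f' z \<le> f' y"
  shows "\<bar>interp_error f a h x\<bar> \<le> h * (f' a - f' (a + h))"
proof (cases "x = 0")
  case True
  then show ?thesis
    using antimono[of a "a + h"] assms by (simp add: interp_error_def)
next
  case False
  obtain y where y: "a < y" "y < a + x" "f (a + x) - f a = x * f' y"
    using MVT2[of a "a + x" f f'] deriv False assms by force
  obtain z where z: "a < z" "z < a + h" "f (a + h) - f a = h * f' z"
    using MVT2[of a "a + h" f f'] deriv assms by force
  have "interp_error f a h x = x * (f' z - f' y)"
    using y(3) z(3) assms by (simp add: interp_error_def algebra_simps)
  moreover have "f' (a + h) \<le> f' y" "f' y \<le> f' a" "f' (a + h) \<le> f' z" "f' z \<le> f' a"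
    using antimono y z assms by auto
  then have "\<bar>f' z - f' y\<bar> \<le> f' a - f' (a + h)"
    by (simp add: abs_le_iff)
  ultimately show ?thesis
    using assms False by (simp add: abs_mult mult_mono)
qed

lemma interp_error_ramp_left:
  assumes "a + h \<le> 0" "0 \<le> x" "x \<le> h"
  shows "interp_error (ramp \<beta>) a h x = 0"
  using assms by (simp add: interp_error_def)

lemma interp_error_ramp_origin:
  assumes "0 < h" "0 \<le> x" "x \<le> h" "\<beta> < 1"
  shows "\<bar>interp_error (ramp \<beta>) 0 h x\<bar> \<le> h powr (1 - \<beta>) / (1 - \<beta>)"
proof -
  define R where "R = h powr (1 - \<beta>) / (1 - \<beta>)"
  have "interp_error (ramp \<beta>) 0 h x = x / h * R - ramp \<beta> x"
    using assms by (simp add: interp_error_def ramp_nonneg R_def)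
  moreover have "ramp \<beta> x \<le> R"
    unfolding R_def using assms by (auto simp: ramp_nonneg intro!: divide_right_mono powr_mono2)
  moreover have "x / h * R \<le> R"
    unfolding R_def using assms by (intro mult_left_le_one_le) auto
  moreover have "0 \<le> ramp \<beta> x" "0 \<le> x / h * R"
    unfolding R_def using assms by (auto simp: ramp_nonneg)
  ultimately show ?thesis
    unfolding R_def by (simp add: abs_le_iff)
qed

lemma interp_error_ramp_right:
  assumes "0 < a" "0 < h" "0 \<le> x" "x \<le> h" "0 < \<beta>" "\<beta> < 1"
  shows "\<bar>interp_error (ramp \<beta>) a h x\<bar> \<le> h * (a powr (- \<beta>) - (a + h) powr (- \<beta>))"
  by (rule interp_error_abs_le_antimono_deriv)
     (use assms in \<open>auto intro!: has_real_derivative_ramp powr_mono2'\<close>)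

lemma powr_neg_diff_le:
  fixes a h \<beta> :: real
  assumes "0 < a" "0 < h" "0 < \<beta>"
  shows "a powr (- \<beta>) - (a + h) powr (- \<beta>) \<le> \<beta> * h * a powr (- 1 - \<beta>)"
proof -
  have "((\<lambda>y. y powr (- \<beta>)) has_real_derivative - \<beta> * y powr (- \<beta> - 1)) (at y)"
    if "a \<le> y" for y
    using that assms by (intro has_real_derivative_powr) auto
  then obtain z where z: "a < z" "(a + h) powr (- \<beta>) - a powr (- \<beta>) = h * (- \<beta> * z powr (- \<beta> - 1))"
    using MVT2[of a "a + h" "\<lambda>y. y powr (- \<beta>)"] assms by force
  have "z powr (- \<beta> - 1) \<le> a powr (- \<beta> - 1)"
    using z assms by (intro powr_mono2') auto
  then have "\<beta> * h * z powr (- \<beta> - 1) \<le> \<beta> * h * a powr (- \<beta> - 1)"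
    using assms by (intro mult_left_mono) auto
  moreover have "- 1 - \<beta> = - \<beta> - 1"
    by simp
  ultimately show ?thesis
    using z(2) by (simp only:) (simp add: algebra_simps)
qed

lemma sum_powr_neg_telescope:
  fixes h \<beta> :: real
  shows "(\<Sum>j<n. (real (n - j) * h) powr (- \<beta>) - (real (Suc (n - j)) * h) powr (- \<beta>))
         = h powr (- \<beta>) - (real (Suc n) * h) powr (- \<beta>)"
proof -
  define g where "g i = (real (Suc i) * h) powr (- \<beta>)" for i
  have "(\<Sum>j<n. (real (n - j) * h) powr (- \<beta>) - (real (Suc (n - j)) * h) powr (- \<beta>))
      = (\<Sum>i<n. g i - g (Suc i))"
    by (subst sum.nat_diff_reindex[symmetric]) (auto intro!: sum.cong simp: g_def Suc_diff_Suc)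
  also have "\<dots> = h powr (- \<beta>) - (real (Suc n) * h) powr (- \<beta>)"
    by (simp only: sum_lessThan_telescope') (simp add: g_def)
  finally show ?thesis .
qed

lemma sum_abs_interp_error_ramp:
  assumes "0 < h" "0 \<le> x" "x \<le> h" "0 < \<beta>" "\<beta> < 1" "n < N"
  shows "(\<Sum>j<N. \<bar>interp_error (ramp \<beta>) (real n * h - real j * h) h x\<bar>)
         \<le> (1 + 1 / (1 - \<beta>)) * h powr (1 - \<beta>)"
proof -
  let ?E = "\<lambda>j. \<bar>interp_error (ramp \<beta>) (real n * h - real j * h) h x\<bar>"
  have "(\<Sum>j<N. ?E j) = (\<Sum>j\<le>n. ?E j)"
  proof (rule sum.mono_neutral_right)
    show "\<forall>j\<in>{..<N} - {..n}. ?E j = 0"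
    proof
      fix j assume "j \<in> {..<N} - {..n}"
      then have "real (Suc n) * h \<le> real j * h"
        using assms by (intro mult_right_mono) auto
      then have "real n * h - real j * h + h \<le> 0"
        by (simp add: algebra_simps)
      then show "?E j = 0"
        using interp_error_ramp_left assms by simp
    qed
  qed (use assms in auto)
  also have "\<dots> = (\<Sum>j<n. ?E j) + ?E n"
    by (simp add: lessThan_Suc_atMost[symmetric])
  finally have split: "(\<Sum>j<N. ?E j) = (\<Sum>j<n. ?E j) + ?E n" .
  have "(\<Sum>j<n. ?E j) \<le> (\<Sum>j<n. h * ((real (n - j) * h) powr (- \<beta>) - (real (Suc (n - j)) * h) powr (- \<beta>)))"
  proof (rule sum_mono)
    fix j assume "j \<in> {..<n}"
    then have pos: "0 < real (n - j) * h"
      and eq: "real n * h - real j * h = real (n - j) * h" "real (n - j) * h + h = real (Suc (n - j)) * h"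
      using assms by (auto simp: of_nat_diff algebra_simps)
    show "?E j \<le> h * ((real (n - j) * h) powr (- \<beta>) - (real (Suc (n - j)) * h) powr (- \<beta>))"
      using interp_error_ramp_right[OF pos assms(1-5)] unfolding eq .
  qed
  also have "\<dots> = h * (h powr (- \<beta>) - (real (Suc n) * h) powr (- \<beta>))"
    by (simp only: sum_distrib_left[symmetric] sum_powr_neg_telescope)
  also have "\<dots> \<le> h powr (1 - \<beta>)"
    using assms by (simp add: powr_diff powr_minus divide_inverse)
  finally have "(\<Sum>j<n. ?E j) \<le> h powr (1 - \<beta>)" .
  moreover have "?E n \<le> h powr (1 - \<beta>) / (1 - \<beta>)"
    using interp_error_ramp_origin assms by simp
  ultimately show ?thesis
    unfolding split by (simp add: algebra_simps)
qed

lemma powr_neg_le_half: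
  fixes a \<tau> \<beta> :: real
  assumes "0 < \<tau>" "\<tau> \<le> 2 * a" "0 \<le> \<beta>" "\<beta> \<le> 1"
  shows "a powr (- 1 - \<beta>) \<le> 4 * \<tau> powr (- 1 - \<beta>)"
proof -
  have "a powr (- 1 - \<beta>) \<le> (\<tau> / 2) powr (- 1 - \<beta>)"
    using assms by (intro powr_mono2') auto
  also have "\<dots> = 2 powr (1 + \<beta>) * \<tau> powr (- 1 - \<beta>)"
  proof -
    have "(\<tau> / 2) powr (- 1 - \<beta>) = \<tau> powr (- 1 - \<beta>) / 2 powr (- (1 + \<beta>))"
      using assms powr_divide[of \<tau> 2 "- 1 - \<beta>"] by simp
    then show ?thesis
      by (simp only: powr_minus_divide) simp
  qed
  also have "\<dots> \<le> 4 * \<tau> powr (- 1 - \<beta>)"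
    using powr_mono[of "1 + \<beta>" 2 "2::real"] assms by (intro mult_right_mono) auto
  finally show ?thesis .
qed

lemma interp_error_ramp_first:
  assumes "0 < h" "0 < \<beta>" "\<beta> < 1" "real n * h \<le> \<tau>" "\<tau> \<le> real (Suc n) * h"
  shows "\<bar>interp_error (ramp \<beta>) (real n * h) h (\<tau> - real n * h)\<bar>
         \<le> (4 + 1 / (1 - \<beta>)) * h\<^sup>2 * max \<tau> h powr (- 1 - \<beta>)"
proof (cases "n = 0")
  case True
  define P where "P = h\<^sup>2 * h powr (- 1 - \<beta>)"
  have "max \<tau> h = h"
    using True assms by simp
  moreover have "h powr (1 - \<beta>) = P"
    using assms by (simp add: P_def powr_add[symmetric] flip: powr_numeral)
  moreover have "P / (1 - \<beta>) \<le> (4 + 1 / (1 - \<beta>)) * P"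
    using assms by (simp add: P_def distrib_right)
  ultimately show ?thesis
    using True interp_error_ramp_origin[of h \<tau> \<beta>] assms by (simp add: P_def)
next
  case False
  define a where "a = real n * h"
  have "1 * h \<le> a"
    unfolding a_def using False assms by (intro mult_right_mono) auto
  moreover have "a \<le> \<tau>" "\<tau> \<le> a + h"
    using assms by (simp_all add: a_def algebra_simps)
  ultimately have a: "h \<le> a" "\<tau> \<le> 2 * a" "h \<le> \<tau>"
    by linarith+
  have decay: "a powr (- 1 - \<beta>) \<le> 4 * max \<tau> h powr (- 1 - \<beta>)"
    using powr_neg_le_half[of \<tau> a \<beta>] assms a by simp
  have "\<bar>interp_error (ramp \<beta>) a h (\<tau> - a)\<bar> \<le> h * (a powr (- \<beta>) - (a + h) powr (- \<beta>))"
    using assms a by (intro interp_error_ramp_right) (auto simp: a_def algebra_simps)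
  also have "\<dots> \<le> h * (\<beta> * h * a powr (- 1 - \<beta>))"
    using assms a by (intro mult_left_mono powr_neg_diff_le) auto
  also have "\<dots> \<le> h * (1 * h * (4 * max \<tau> h powr (- 1 - \<beta>)))"
    using assms a decay by (intro mult_left_mono mult_mono) auto
  also have "\<dots> \<le> (4 + 1 / (1 - \<beta>)) * h\<^sup>2 * max \<tau> h powr (- 1 - \<beta>)"
    using assms by (simp add: power2_eq_square distrib_right)
  finally show ?thesis
    by (simp add: a_def)
qed

section \<open>The Caputo derivative of the piecewise linear interpolant\<close>

definition pl_cell :: "real \<Rightarrow> nat \<Rightarrow> real \<Rightarrow> nat" where
  "pl_cell \<kappa> N \<tau> = min (nat \<lfloor>\<tau> / \<kappa>\<rfloor>) (N - 1)"

definition pl_slope :: "real \<Rightarrow> (real \<Rightarrow> real) \<Rightarrow> nat \<Rightarrow> real" where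
  "pl_slope \<kappa> u j = (u (real (Suc j) * \<kappa>) - u (real j * \<kappa>)) / \<kappa>"

definition pl_jump :: "real \<Rightarrow> (real \<Rightarrow> real) \<Rightarrow> nat \<Rightarrow> real" where
  "pl_jump \<kappa> u j = (if j = 0 then pl_slope \<kappa> u 0 else pl_slope \<kappa> u j - pl_slope \<kappa> u (j - 1))"

lemma pl_interp_cell:
  "pl_interp \<kappa> N g \<tau> = g (real (pl_cell \<kappa> N \<tau>) * \<kappa>)
     + (\<tau> - real (pl_cell \<kappa> N \<tau>) * \<kappa>) * pl_slope \<kappa> g (pl_cell \<kappa> N \<tau>)"
  by (simp add: pl_interp_def pl_cell_def pl_slope_def Let_def)

lemma pl_cell_bounds:
  assumes "0 < \<kappa>" "1 \<le> N" "0 \<le> \<tau>" "\<tau> \<le> real N * \<kappa>"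
  shows "pl_cell \<kappa> N \<tau> < N" "real (pl_cell \<kappa> N \<tau>) * \<kappa> \<le> \<tau>" "\<tau> \<le> real (Suc (pl_cell \<kappa> N \<tau>)) * \<kappa>"
proof -
  let ?n = "pl_cell \<kappa> N \<tau>"
  show "?n < N"
    using assms by (simp add: pl_cell_def)
  have "real ?n \<le> real (nat \<lfloor>\<tau> / \<kappa>\<rfloor>)"
    by (simp add: pl_cell_def)
  also have "\<dots> \<le> \<tau> / \<kappa>"
    using assms by simp
  finally have "real ?n \<le> \<tau> / \<kappa>" .
  then show "real ?n * \<kappa> \<le> \<tau>"
    using assms by (simp add: pos_le_divide_eq)
  have "\<tau> / \<kappa> \<le> real (Suc ?n)"
  proof (cases "nat \<lfloor>\<tau> / \<kappa>\<rfloor> \<le> N - 1")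
    case True
    then show ?thesis
      using assms by (simp add: pl_cell_def) linarith
  next
    case False
    then have "Suc ?n = N"
      using assms by (simp add: pl_cell_def)
    then show ?thesis
      using assms by (simp add: pos_divide_le_eq)
  qed
  then show "\<tau> \<le> real (Suc ?n) * \<kappa>"
    using assms by (simp add: pos_divide_le_eq)
qed

lemma pl_cell_eqI:
  assumes "0 < \<kappa>" "j < N" "real j * \<kappa> \<le> \<sigma>" "\<sigma> < real (Suc j) * \<kappa>"
  shows "pl_cell \<kappa> N \<sigma> = j"
proof -
  have "\<lfloor>\<sigma> / \<kappa>\<rfloor> = int j"
    using assms by (intro floor_unique) (simp_all add: pos_le_divide_eq pos_divide_less_eq add.commute)
  then show ?thesis
    using assms by (simp add: pl_cell_def)
qed

lemma pl_interp_minus_eq_interp_error: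
  "pl_interp \<kappa> N g \<tau> - g \<tau>
   = interp_error g (real (pl_cell \<kappa> N \<tau>) * \<kappa>) \<kappa> (\<tau> - real (pl_cell \<kappa> N \<tau>) * \<kappa>)"
proof -
  have "real (Suc n) * \<kappa> = real n * \<kappa> + \<kappa>" for n
    by (simp add: distrib_right)
  then show ?thesis
    by (simp add: pl_interp_cell interp_error_def pl_slope_def)
qed

lemma has_real_derivative_pl_interp:
  assumes "0 < \<kappa>" "j < N" "real j * \<kappa> < \<sigma>" "\<sigma> < real (Suc j) * \<kappa>"
  shows "(pl_interp \<kappa> N u has_real_derivative pl_slope \<kappa> u j) (at \<sigma>)"
proof -
  have "((\<lambda>y. u (real j * \<kappa>) + (y - real j * \<kappa>) * pl_slope \<kappa> u j)
      has_real_derivative pl_slope \<kappa> u j) (at \<sigma>)"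
    by (auto intro!: derivative_eq_intros)
  then show ?thesis
    by (rule has_field_derivative_transform_within_open[of _ _ _ "{real j * \<kappa><..<real (Suc j) * \<kappa>}"])
       (use assms pl_cell_eqI[of \<kappa> j N] in \<open>auto simp: pl_interp_cell\<close>)
qed

lemma pl_slope_eq_sum_jumps: "pl_slope \<kappa> u n = (\<Sum>j\<le>n. pl_jump \<kappa> u j)"
  by (induction n) (simp_all add: pl_jump_def)

lemma pl_slope_eq_deriv:
  fixes u u' :: "real \<Rightarrow> real"
  assumes deriv: "\<And>x. x \<in> {a..b} \<Longrightarrow> (u has_real_derivative u' x) (at x within {a..b})"
    and "0 < \<kappa>" "a \<le> real j * \<kappa>" "real (Suc j) * \<kappa> \<le> b"
  obtains \<xi> where "\<xi> \<in> {real j * \<kappa>..real (Suc j) * \<kappa>}" "pl_slope \<kappa> u j = u' \<xi>"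
proof -
  have "\<exists>\<xi>\<in>{real j * \<kappa>..real (Suc j) * \<kappa>}.
      u (real (Suc j) * \<kappa>) - u (real j * \<kappa>) = u' \<xi> * (real (Suc j) * \<kappa> - real j * \<kappa>)"
  proof (rule mvt_very_simple)
    fix x assume "real j * \<kappa> \<le> x" "x \<le> real (Suc j) * \<kappa>"
    then have "(u has_real_derivative u' x) (at x within {real j * \<kappa>..real (Suc j) * \<kappa>})"
      using assms by (intro DERIV_subset[OF deriv]) auto
    then show "(u has_derivative (*) (u' x)) (at x within {real j * \<kappa>..real (Suc j) * \<kappa>})"
      by (simp add: has_field_derivative_def)
  qed (use assms in simp)
  then show ?thesis
    using that assms by (auto simp: pl_slope_def algebra_simps)
qed

lemma abs_pl_jump_0_le:
  fixes u u' :: "real \<Rightarrow> real"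
  assumes "\<And>x. x \<in> {0..T} \<Longrightarrow> (u has_real_derivative u' x) (at x within {0..T})"
    and "\<And>x. x \<in> {0..T} \<Longrightarrow> \<bar>u' x\<bar> \<le> M1" "0 < \<kappa>" "\<kappa> \<le> T"
  shows "\<bar>pl_jump \<kappa> u 0\<bar> \<le> M1"
proof -
  obtain \<xi> where "\<xi> \<in> {0..\<kappa>}" "pl_slope \<kappa> u 0 = u' \<xi>"
    using pl_slope_eq_deriv[of 0 T u u' \<kappa> 0] assms by auto
  then show ?thesis
    using assms by (simp add: pl_jump_def)
qed

lemma abs_pl_jump_le:
  fixes u u' u'' :: "real \<Rightarrow> real"
  assumes d1: "\<And>x. x \<in> {0..T} \<Longrightarrow> (u has_real_derivative u' x) (at x within {0..T})"
    and d2: "\<And>x. x \<in> {0..T} \<Longrightarrow> (u' has_real_derivative u'' x) (at x within {0..T})"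
    and M2: "\<And>x. x \<in> {0..T} \<Longrightarrow> \<bar>u'' x\<bar> \<le> M2"
    and "0 < \<kappa>" "0 < j" "real (Suc j) * \<kappa> \<le> T"
  shows "\<bar>pl_jump \<kappa> u j\<bar> \<le> 2 * M2 * \<kappa>"
proof -
  obtain i where j: "j = Suc i"
    using assms by (cases j) auto
  have "real (Suc i) * \<kappa> \<le> real (Suc j) * \<kappa>"
    using j assms by (intro mult_right_mono) auto
  then have iT: "real (Suc i) * \<kappa> \<le> T"
    using assms by linarith
  then obtain \<eta> where \<eta>: "\<eta> \<in> {real i * \<kappa>..real (Suc i) * \<kappa>}" "pl_slope \<kappa> u i = u' \<eta>"
    using pl_slope_eq_deriv[OF d1, of \<kappa> i] assms by auto
  obtain \<xi> where \<xi>: "\<xi> \<in> {real j * \<kappa>..real (Suc j) * \<kappa>}" "pl_slope \<kappa> u j = u' \<xi>"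
    using pl_slope_eq_deriv[OF d1, of \<kappa> j] assms by auto
  have "0 \<le> real i * \<kappa>" "0 \<le> real j * \<kappa>"
    using assms by simp_all
  with \<xi>(1) \<eta>(1) iT assms(6) have "\<xi> \<in> {0..T}" "\<eta> \<in> {0..T}"
    by auto
  then have "0 \<le> M2"
    using M2 by (auto intro: order_trans[OF abs_ge_zero])
  have "\<bar>u' \<xi> - u' \<eta>\<bar> \<le> M2 * \<bar>\<xi> - \<eta>\<bar>"
    using field_differentiable_bound[OF convex_real_interval(5) d2, of M2 \<xi> \<eta>] M2 \<open>\<xi> \<in> {0..T}\<close> \<open>\<eta> \<in> {0..T}\<close>
    by auto
  also have "\<dots> \<le> M2 * (2 * \<kappa>)"
    using \<xi> \<eta> j \<open>0 \<le> M2\<close> by (intro mult_left_mono) (auto simp: abs_le_iff algebra_simps)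
  finally show ?thesis
    using \<xi> \<eta> j by (simp add: pl_jump_def)
qed

lemma deriv_pl_interp_eq_sum_steps:
  assumes "0 < \<kappa>" "1 \<le> N" "\<sigma> \<in> {0..real N * \<kappa>} - (\<lambda>j. real j * \<kappa>) ` {..N}"
  shows "deriv (pl_interp \<kappa> N u) \<sigma> = (\<Sum>j<N. pl_jump \<kappa> u j * (if real j * \<kappa> < \<sigma> then 1 else 0))"
proof -
  define n where "n = pl_cell \<kappa> N \<sigma>"
  have n: "n < N" "real n * \<kappa> \<le> \<sigma>" "\<sigma> \<le> real (Suc n) * \<kappa>"
    using pl_cell_bounds[of \<kappa> N \<sigma>] assms unfolding n_def by auto
  have "real n * \<kappa> \<noteq> \<sigma>" "real (Suc n) * \<kappa> \<noteq> \<sigma>"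
    using assms n by (auto simp del: of_nat_Suc)
  with n have cell: "real n * \<kappa> < \<sigma>" "\<sigma> < real (Suc n) * \<kappa>"
    by auto
  have step: "real j * \<kappa> < \<sigma> \<longleftrightarrow> j \<le> n" for j
  proof
    assume "real j * \<kappa> < \<sigma>"
    then have "real j * \<kappa> < real (Suc n) * \<kappa>"
      using cell by linarith
    then show "j \<le> n"
      using assms by simp
  next
    assume "j \<le> n"
    then have "real j * \<kappa> \<le> real n * \<kappa>"
      using assms by (intro mult_right_mono) auto
    then show "real j * \<kappa> < \<sigma>"
      using cell by linarith
  qed
  have "deriv (pl_interp \<kappa> N u) \<sigma> = pl_slope \<kappa> u n"
    using has_real_derivative_pl_interp[OF assms(1) n(1) cell] by (rule DERIV_imp_deriv)
  also have "\<dots> = (\<Sum>j\<in>{j\<in>{..<N}. j \<le> n}. pl_jump \<kappa> u j)"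
  proof -
    have "{j\<in>{..<N}. j \<le> n} = {..n}"
      using n by auto
    then show ?thesis
      by (simp add: pl_slope_eq_sum_jumps)
  qed
  also have "\<dots> = (\<Sum>j<N. pl_jump \<kappa> u j * (if real j * \<kappa> < \<sigma> then 1 else 0))"
    by (subst sum.inter_filter) (auto simp: step intro!: sum.cong)
  finally show ?thesis .
qed

lemma has_integral_caputo_step:
  assumes "0 \<le> a" "0 \<le> \<tau>" "\<beta> < 1"
  shows "((\<lambda>\<sigma>. (\<tau> - \<sigma>) powr (- \<beta>) * (if a < \<sigma> then 1 else 0)) has_integral ramp \<beta> (\<tau> - a)) {0..\<tau>}"
proof (cases "a < \<tau>")
  case True
  have "((\<lambda>\<sigma>. (\<tau> - \<sigma>) powr (1 - \<beta> - 1)) has_integral ((\<tau> - a) powr (1 - \<beta>) - (\<tau> - \<tau>) powr (1 - \<beta>)) / (1 - \<beta>)) {a..\<tau>}"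
    using True assms by (intro has_integral_diff_powr) auto
  then have "((\<lambda>\<sigma>. (\<tau> - \<sigma>) powr (- \<beta>)) has_integral ramp \<beta> (\<tau> - a)) (cbox a \<tau>)"
    using True by (simp add: ramp_nonneg)
  from has_integral_restrict_closed_subinterval[OF this, of 0 \<tau>]
  have restricted: "((\<lambda>\<sigma>. if \<sigma> \<in> {a..\<tau>} then (\<tau> - \<sigma>) powr (- \<beta>) else 0) has_integral ramp \<beta> (\<tau> - a)) {0..\<tau>}"
    using assms by simp
  show ?thesis
    by (rule has_integral_spike_finite[OF _ _ restricted, of "{a}"]) auto
next
  case False
  then show ?thesis
    by (auto intro!: has_integral_is_0)
qed

lemma caputo_pl_interp:
  assumes "0 < \<kappa>" "1 \<le> N" "\<beta> < 1" "0 \<le> \<tau>" "\<tau> \<le> real N * \<kappa>"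
  shows "caputo \<beta> (pl_interp \<kappa> N u) \<tau>
         = 1 / Gamma (1 - \<beta>) * (\<Sum>j<N. pl_jump \<kappa> u j * ramp \<beta> (\<tau> - real j * \<kappa>))"
proof -
  have steps: "((\<lambda>\<sigma>. \<Sum>j<N. pl_jump \<kappa> u j * ((\<tau> - \<sigma>) powr (- \<beta>) * (if real j * \<kappa> < \<sigma> then 1 else 0)))
      has_integral (\<Sum>j<N. pl_jump \<kappa> u j * ramp \<beta> (\<tau> - real j * \<kappa>))) {0..\<tau>}"
    using assms by (intro has_integral_sum has_integral_mult_right has_integral_caputo_step) auto
  have "((\<lambda>\<sigma>. (\<tau> - \<sigma>) powr (- \<beta>) * deriv (pl_interp \<kappa> N u) \<sigma>)
      has_integral (\<Sum>j<N. pl_jump \<kappa> u j * ramp \<beta> (\<tau> - real j * \<kappa>))) {0..\<tau>}"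
  \<comment> \<open>\<open>deriv\<close> of the interpolant is junk at the nodes, a finite set the integral ignores\<close>
  proof (rule has_integral_spike_finite[OF _ _ steps])
    fix \<sigma> assume "\<sigma> \<in> {0..\<tau>} - (\<lambda>j. real j * \<kappa>) ` {..N}"
    then show "(\<tau> - \<sigma>) powr (- \<beta>) * deriv (pl_interp \<kappa> N u) \<sigma>
        = (\<Sum>j<N. pl_jump \<kappa> u j * ((\<tau> - \<sigma>) powr (- \<beta>) * (if real j * \<kappa> < \<sigma> then 1 else 0)))"
      using assms deriv_pl_interp_eq_sum_steps[of \<kappa> N \<sigma> u]
      by (simp add: sum_distrib_left algebra_simps)
  qed (rule finite_imageI[OF finite_atMost])
  then show ?thesis
    unfolding caputo_def by (simp add: integral_unique)
qed

lemma pl_interp_caputo_error_eq: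
  assumes "0 < \<kappa>" "1 \<le> N" "\<beta> < 1" "0 \<le> \<tau>" "\<tau> \<le> real N * \<kappa>"
  defines "n \<equiv> pl_cell \<kappa> N \<tau>"
  shows "pl_interp \<kappa> N (caputo \<beta> (pl_interp \<kappa> N u)) \<tau> - caputo \<beta> (pl_interp \<kappa> N u) \<tau>
         = 1 / Gamma (1 - \<beta>) * (\<Sum>j<N. pl_jump \<kappa> u j
              * interp_error (ramp \<beta>) (real n * \<kappa> - real j * \<kappa>) \<kappa> (\<tau> - real n * \<kappa>))"
proof -
  have n: "n < N" "real n * \<kappa> \<le> \<tau>" "\<tau> \<le> real (Suc n) * \<kappa>"
    using pl_cell_bounds[OF assms(1,2,4,5)] unfolding n_def by auto
  have "real (Suc n) * \<kappa> \<le> real N * \<kappa>"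
    using n assms by (intro mult_right_mono) auto
  then have nodes: "0 \<le> real n * \<kappa>" "real n * \<kappa> + \<kappa> \<le> real N * \<kappa>"
    using assms by (auto simp: distrib_right)
  have "pl_interp \<kappa> N (caputo \<beta> (pl_interp \<kappa> N u)) \<tau> - caputo \<beta> (pl_interp \<kappa> N u) \<tau>
      = interp_error (caputo \<beta> (pl_interp \<kappa> N u)) (real n * \<kappa>) \<kappa> (\<tau> - real n * \<kappa>)"
    unfolding n_def by (rule pl_interp_minus_eq_interp_error)
  also have "\<dots> = interp_error (\<lambda>y. 1 / Gamma (1 - \<beta>) * (\<Sum>j<N. pl_jump \<kappa> u j * ramp \<beta> (y - real j * \<kappa>)))
      (real n * \<kappa>) \<kappa> (\<tau> - real n * \<kappa>)"
    using nodes n assms(1,4,5) by (intro interp_error_cong) (simp_all add: caputo_pl_interp[OF assms(1-3)])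
  also have "\<dots> = 1 / Gamma (1 - \<beta>) * (\<Sum>j<N. pl_jump \<kappa> u j
      * interp_error (ramp \<beta>) (real n * \<kappa> - real j * \<kappa>) \<kappa> (\<tau> - real n * \<kappa>))"
    by (simp only: interp_error_linear interp_error_shift)
  finally show ?thesis .
qed

lemma pl_interp_caputo_error_le:
  assumes "0 < \<kappa>" "1 \<le> N" "0 < \<beta>" "\<beta> < 1" "0 \<le> \<tau>" "\<tau> \<le> real N * \<kappa>" "0 \<le> M2"
    and jump0: "\<bar>pl_jump \<kappa> u 0\<bar> \<le> M1"
    and jump: "\<And>j. 0 < j \<Longrightarrow> j < N \<Longrightarrow> \<bar>pl_jump \<kappa> u j\<bar> \<le> M2 * \<kappa>"
  shows "\<bar>pl_interp \<kappa> N (caputo \<beta> (pl_interp \<kappa> N u)) \<tau> - caputo \<beta> (pl_interp \<kappa> N u) \<tau>\<bar>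
         \<le> \<bar>1 / Gamma (1 - \<beta>)\<bar> * (M1 * (4 + 1 / (1 - \<beta>)) * \<kappa>\<^sup>2 * max \<tau> \<kappa> powr (- 1 - \<beta>)
              + M2 * (1 + 1 / (1 - \<beta>)) * \<kappa> powr (2 - \<beta>))"
proof -
  define n where "n = pl_cell \<kappa> N \<tau>"
  have n: "n < N" "real n * \<kappa> \<le> \<tau>" "\<tau> \<le> real (Suc n) * \<kappa>"
    using pl_cell_bounds[OF assms(1,2,5,6)] unfolding n_def by auto
  define e where "e j = interp_error (ramp \<beta>) (real n * \<kappa> - real j * \<kappa>) \<kappa> (\<tau> - real n * \<kappa>)" for j
  have x: "0 \<le> \<tau> - real n * \<kappa>" "\<tau> - real n * \<kappa> \<le> \<kappa>"
    using n by (auto simp: algebra_simps)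
  have "\<bar>\<Sum>j<N. pl_jump \<kappa> u j * e j\<bar> \<le> M1 * \<bar>e 0\<bar> + M2 * \<kappa> * (\<Sum>j<N. \<bar>e j\<bar>)"
    using jump0 jump assms by (intro abs_sum_mult_le_head_tail) simp_all
  also have "\<dots> \<le> M1 * ((4 + 1 / (1 - \<beta>)) * \<kappa>\<^sup>2 * max \<tau> \<kappa> powr (- 1 - \<beta>))
      + M2 * \<kappa> * ((1 + 1 / (1 - \<beta>)) * \<kappa> powr (1 - \<beta>))"
    using interp_error_ramp_first[OF assms(1,3,4) n(2,3)] sum_abs_interp_error_ramp[OF assms(1) x assms(3,4) n(1)]
      jump0 assms unfolding e_def by (intro add_mono mult_left_mono) auto
  also have "\<dots> = M1 * (4 + 1 / (1 - \<beta>)) * \<kappa>\<^sup>2 * max \<tau> \<kappa> powr (- 1 - \<beta>)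
      + M2 * (1 + 1 / (1 - \<beta>)) * \<kappa> powr (2 - \<beta>)"
  proof -
    have "\<kappa> * \<kappa> powr (1 - \<beta>) = \<kappa> powr (2 - \<beta>)"
      using assms by (simp add: powr_add[symmetric] powr_mult_base)
    then show ?thesis
      by (simp only: mult_ac flip: \<open>\<kappa> * \<kappa> powr (1 - \<beta>) = \<kappa> powr (2 - \<beta>)\<close>)
  qed
  finally show ?thesis
    using pl_interp_caputo_error_eq[OF assms(1,2,4,5,6), of u] unfolding n_def[symmetric] e_def
    by (simp only: abs_mult mult_left_mono abs_ge_zero)
qed

section \<open>A weakly singular integral\<close>

lemma weakly_singular_integrable:
  fixes t \<kappa> \<beta> :: real
  assumes "0 < \<kappa>" "0 < \<beta>"
  shows "(\<lambda>\<tau>. (t - \<tau>) powr (\<beta> - 1) * max \<tau> \<kappa> powr (- 1 - \<beta>)) integrable_on {0..t}"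
proof (cases "0 \<le> t")
  case True
  have "((\<lambda>\<tau>. (t - \<tau>) powr (\<beta> - 1)) has_integral ((t - 0) powr \<beta> - (t - t) powr \<beta>) / \<beta>) {0..t}"
    using True assms by (intro has_integral_diff_powr) auto
  then have "(\<lambda>\<tau>. (t - \<tau>) powr (\<beta> - 1)) absolutely_integrable_on {0..t}"
    by (intro nonnegative_absolutely_integrable_1) (auto dest: has_integral_integrable)
  moreover have "continuous_on {0..t} (\<lambda>\<tau>. max \<tau> \<kappa> powr (- 1 - \<beta>))"
    using assms by (intro continuous_intros) auto
  then have "bounded ((\<lambda>\<tau>. max \<tau> \<kappa> powr (- 1 - \<beta>)) ` {0..t})"
    by (intro compact_imp_bounded compact_continuous_image compact_Icc)
  ultimately have "(\<lambda>\<tau>. max \<tau> \<kappa> powr (- 1 - \<beta>) * (t - \<tau>) powr (\<beta> - 1)) absolutely_integrable_on {0..t}"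
    using \<open>continuous_on _ _\<close>
    by (intro absolutely_integrable_bounded_measurable_product_real continuous_imp_measurable_on_sets_lebesgue) auto
  then show ?thesis
    by (simp add: absolutely_integrable_on_def mult.commute)
qed auto

lemma powr_sub_max_half_le:
  fixes t \<kappa> \<beta> :: real
  assumes "0 < \<kappa>" "\<kappa> < t" "0 < \<beta>" "\<beta> < 1"
  shows "(t - max \<kappa> (t / 2)) powr (\<beta> - 1) \<le> 2 * (t - \<kappa>) powr (\<beta> - 1)"
proof -
  have "(t - max \<kappa> (t / 2)) powr (\<beta> - 1) \<le> ((t - \<kappa>) / 2) powr (\<beta> - 1)"
    using assms by (intro powr_mono2') (auto simp: max_def)
  also have "\<dots> = (t - \<kappa>) powr (\<beta> - 1) / 2 powr (- (1 - \<beta>))"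
    using assms powr_divide[of "t - \<kappa>" 2 "\<beta> - 1"] by simp
  also have "\<dots> = 2 powr (1 - \<beta>) * (t - \<kappa>) powr (\<beta> - 1)"
    by (simp only: powr_minus_divide) simp
  also have "\<dots> \<le> 2 * (t - \<kappa>) powr (\<beta> - 1)"
    using powr_mono[of "1 - \<beta>" 1 "2::real"] assms by (intro mult_right_mono) auto
  finally show ?thesis .
qed

lemma powr_half_mult_tail_le:
  fixes t \<kappa> \<beta> :: real
  assumes "0 < \<kappa>" "\<kappa> < t" "0 < \<beta>" "\<beta> < 1"
  shows "(t / 2) powr (- 1 - \<beta>) * (t - max \<kappa> (t / 2)) powr \<beta> \<le> 2 * \<kappa> powr (- \<beta>) * (t - \<kappa>) powr (\<beta> - 1)"
proof -
  have "(t / 2) powr (- 1 - \<beta>) * (t - max \<kappa> (t / 2)) powr \<beta> \<le> (t / 2) powr (- 1 - \<beta>) * (t / 2) powr \<beta>"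
    using assms by (intro mult_left_mono powr_mono2) auto
  also have "\<dots> = 2 * (t powr (- \<beta>) * t powr (\<beta> - 1))"
  proof -
    have "(t / 2) powr (- 1 - \<beta>) * (t / 2) powr \<beta> = 2 / t"
      using assms by (simp add: powr_add[symmetric] powr_minus_divide)
    moreover have "t powr (- \<beta>) * t powr (\<beta> - 1) = 1 / t"
      using assms by (simp only: powr_add[symmetric]) (simp add: powr_minus_divide)
    ultimately show ?thesis
      by simp
  qed
  also have "\<dots> \<le> 2 * (\<kappa> powr (- \<beta>) * (t - \<kappa>) powr (\<beta> - 1))"
    using assms by (intro mult_left_mono mult_mono powr_mono2') auto
  finally show ?thesis
    by (simp add: mult_ac)
qed

text \<open>Split at \<open>\<kappa>\<close> and \<open>s = max \<kappa> (t / 2)\<close>: on \<open>[0, s]\<close> the kernel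
  \<open>(t - \<tau>) powr (\<beta> - 1)\<close> is at most \<open>2 (t - \<kappa>) powr (\<beta> - 1)\<close>, and on \<open>[s, t]\<close>
  the factor \<open>max \<tau> \<kappa> powr (- 1 - \<beta>)\<close> is at most \<open>(t / 2) powr (- 1 - \<beta>)\<close>.\<close>

lemma integral_weakly_singular_le:
  fixes t \<kappa> \<beta> :: real
  assumes "0 < \<kappa>" "\<kappa> < t" "0 < \<beta>" "\<beta> < 1"
  shows "integral {0..t} (\<lambda>\<tau>. (t - \<tau>) powr (\<beta> - 1) * max \<tau> \<kappa> powr (- 1 - \<beta>))
         \<le> 5 / \<beta> * \<kappa> powr (- \<beta>) * (t - \<kappa>) powr (\<beta> - 1)"
proof -
  define h where "h = (\<lambda>\<tau>. (t - \<tau>) powr (\<beta> - 1) * max \<tau> \<kappa> powr (- 1 - \<beta>))"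
  define s where "s = max \<kappa> (t / 2)"
  define W where "W = \<kappa> powr (- \<beta>) * (t - \<kappa>) powr (\<beta> - 1)"
  have s: "\<kappa> \<le> s" "t / 2 \<le> s" "s < t"
    using assms by (auto simp: s_def)
  have s_decay: "s powr (- \<beta>) \<le> \<kappa> powr (- \<beta>)"
    using assms s by (intro powr_mono2') auto
  have "((\<lambda>_. c) has_integral c * \<kappa>) {0..\<kappa>}" for c
    using has_integral_const_real[of c 0 \<kappa>] assms by (simp add: mult.commute)
  then have "integral {0..\<kappa>} h \<le> (t - \<kappa>) powr (\<beta> - 1) * \<kappa> powr (- 1 - \<beta>) * \<kappa>"
  proof (rule integral_le_has_integral_nonneg)
    fix \<tau> assume "\<tau> \<in> {0..\<kappa>}"
    then show "h \<tau> \<le> (t - \<kappa>) powr (\<beta> - 1) * \<kappa> powr (- 1 - \<beta>)"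
      using assms unfolding h_def by (auto intro!: mult_right_mono powr_mono2')
  qed (use assms in simp)
  also have "\<dots> = W"
    using assms by (simp add: W_def powr_add[symmetric] powr_mult_base mult_ac)
  finally have near: "integral {0..\<kappa>} h \<le> W" .
  have "integral {\<kappa>..s} h \<le> (t - s) powr (\<beta> - 1) * ((\<kappa> powr (- \<beta>) - s powr (- \<beta>)) / \<beta>)"
  proof (rule integral_le_has_integral_nonneg[OF has_integral_mult_right[OF has_integral_powr_neg]])
    fix \<tau> assume "\<tau> \<in> {\<kappa>..s}"
    then show "h \<tau> \<le> (t - s) powr (\<beta> - 1) * \<tau> powr (- 1 - \<beta>)"
      using assms s unfolding h_def by (auto intro!: mult_right_mono powr_mono2')
  qed (use assms s s_decay in auto)
  also have "\<dots> \<le> 2 * (t - \<kappa>) powr (\<beta> - 1) * (\<kappa> powr (- \<beta>) / \<beta>)"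
    using powr_sub_max_half_le[OF assms] assms s_decay unfolding s_def[symmetric]
    by (intro mult_mono divide_right_mono) auto
  finally have middle: "integral {\<kappa>..s} h \<le> 2 / \<beta> * W"
    by (simp add: W_def mult_ac)
  have "integral {s..t} h \<le> ((t - s) powr \<beta> - (t - t) powr \<beta>) / \<beta> * (t / 2) powr (- 1 - \<beta>)"
  proof (rule integral_le_has_integral_nonneg[OF has_integral_mult_left[OF has_integral_diff_powr]])
    fix \<tau> assume "\<tau> \<in> {s..t}"
    then show "h \<tau> \<le> (t - \<tau>) powr (\<beta> - 1) * (t / 2) powr (- 1 - \<beta>)"
      using assms s unfolding h_def by (auto intro!: mult_left_mono powr_mono2')
  qed (use assms s in auto)
  also have "\<dots> \<le> 2 / \<beta> * W"
    using divide_right_mono[OF powr_half_mult_tail_le[OF assms], of \<beta>] assms unfolding s_def[symmetric] W_def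
    by (simp add: mult_ac)
  finally have far: "integral {s..t} h \<le> 2 / \<beta> * W" .
  have "integral {0..t} h = integral {0..\<kappa>} h + integral {\<kappa>..s} h + integral {s..t} h"
    using s assms by (intro integral_combine3) (auto simp: h_def intro: weakly_singular_integrable)
  also have "\<dots> \<le> W + 2 / \<beta> * W + 2 / \<beta> * W"
    using near middle far by linarith
  also have "\<dots> \<le> 5 / \<beta> * W"
    using assms by (simp add: W_def field_simps)
  finally show ?thesis
    by (simp add: h_def W_def mult.assoc)
qed

lemma integral_weakly_singular_mult_le:
  fixes e :: "real \<Rightarrow> real"
  assumes "0 < \<kappa>" "\<kappa> < t" "t \<le> T" "0 < \<beta>" "\<beta> < 1" "0 \<le> A" "0 \<le> B"
    and e: "\<And>\<tau>. \<tau> \<in> {0..t} \<Longrightarrow> e \<tau> \<le> A * \<kappa> powr (2 - \<beta>) + B * \<kappa>\<^sup>2 * max \<tau> \<kappa> powr (- 1 - \<beta>)"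
  shows "integral {0..t} (\<lambda>\<tau>. (t - \<tau>) powr (\<beta> - 1) * e \<tau>)
         \<le> (A * T + 5 * B) / \<beta> * \<kappa> powr (2 - \<beta>) * (t - \<kappa>) powr (\<beta> - 1)"
proof -
  define h where "h = (\<lambda>\<tau>. (t - \<tau>) powr (\<beta> - 1) * max \<tau> \<kappa> powr (- 1 - \<beta>))"
  define W where "W = (t - \<kappa>) powr (\<beta> - 1)"
  have "((\<lambda>\<tau>. (t - \<tau>) powr (\<beta> - 1)) has_integral ((t - 0) powr \<beta> - (t - t) powr \<beta>) / \<beta>) {0..t}"
    using assms by (intro has_integral_diff_powr) auto
  then have "((\<lambda>\<tau>. A * \<kappa> powr (2 - \<beta>) * (t - \<tau>) powr (\<beta> - 1) + B * \<kappa>\<^sup>2 * h \<tau>) has_integral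
      A * \<kappa> powr (2 - \<beta>) * (t powr \<beta> / \<beta>) + B * \<kappa>\<^sup>2 * integral {0..t} h) {0..t}"
    unfolding h_def using assms
    by (intro has_integral_add has_integral_mult_right integrable_integral weakly_singular_integrable) auto
  then have "integral {0..t} (\<lambda>\<tau>. (t - \<tau>) powr (\<beta> - 1) * e \<tau>)
      \<le> A * \<kappa> powr (2 - \<beta>) * (t powr \<beta> / \<beta>) + B * \<kappa>\<^sup>2 * integral {0..t} h"
  proof (rule integral_le_has_integral_nonneg)
    fix \<tau> assume "\<tau> \<in> {0..t}"
    then show "(t - \<tau>) powr (\<beta> - 1) * e \<tau> \<le> A * \<kappa> powr (2 - \<beta>) * (t - \<tau>) powr (\<beta> - 1) + B * \<kappa>\<^sup>2 * h \<tau>"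
      using mult_left_mono[OF e, of \<tau> "(t - \<tau>) powr (\<beta> - 1)"] by (simp add: h_def algebra_simps)
  next
    have "0 \<le> integral {0..t} h"
      unfolding h_def using assms by (intro integral_nonneg weakly_singular_integrable) auto
    then show "0 \<le> A * \<kappa> powr (2 - \<beta>) * (t powr \<beta> / \<beta>) + B * \<kappa>\<^sup>2 * integral {0..t} h"
      using assms by simp
  qed
  also have "\<dots> \<le> A * \<kappa> powr (2 - \<beta>) * (T * W / \<beta>) + B * \<kappa>\<^sup>2 * (5 / \<beta> * \<kappa> powr (- \<beta>) * W)"
  proof (intro add_mono mult_left_mono divide_right_mono)
    have "t powr \<beta> = t * t powr (\<beta> - 1)"
      using assms by (simp add: powr_mult_base)
    also have "\<dots> \<le> T * W"
      unfolding W_def using assms by (intro mult_mono powr_mono2') auto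
    finally show "t powr \<beta> \<le> T * W" .
    show "integral {0..t} h \<le> 5 / \<beta> * \<kappa> powr (- \<beta>) * W"
      unfolding h_def W_def using assms(1,2,4,5) by (rule integral_weakly_singular_le)
  qed (use assms in auto)
  also have "\<dots> = (A * T + 5 * B) / \<beta> * \<kappa> powr (2 - \<beta>) * W"
  proof -
    have "\<kappa>\<^sup>2 * \<kappa> powr (- \<beta>) = \<kappa> powr (2 - \<beta>)"
      using assms by (simp add: powr_add[symmetric] flip: powr_numeral)
    then show ?thesis
      using assms by (simp add: field_simps)
  qed
  finally show ?thesis
    unfolding W_def .
qed

lemma pl_interp_caputo_weighted_error_le:
  fixes u u' u'' :: "real \<Rightarrow> real"
  assumes "0 < \<beta>" "\<beta> < 1" "1 \<le> N" "0 < \<kappa>" "real N * \<kappa> = T" "\<kappa> < t" "t \<le> T"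
    and d1: "\<And>x. x \<in> {0..T} \<Longrightarrow> (u has_real_derivative u' x) (at x within {0..T})"
    and d2: "\<And>x. x \<in> {0..T} \<Longrightarrow> (u' has_real_derivative u'' x) (at x within {0..T})"
    and M1: "\<And>x. x \<in> {0..T} \<Longrightarrow> \<bar>u' x\<bar> \<le> M1"
    and M2: "\<And>x. x \<in> {0..T} \<Longrightarrow> \<bar>u'' x\<bar> \<le> M2" "0 \<le> M2"
  shows "integral {0..t} (\<lambda>\<tau>. (t - \<tau>) powr (\<beta> - 1) *
           \<bar>pl_interp \<kappa> N (caputo \<beta> (pl_interp \<kappa> N u)) \<tau> - caputo \<beta> (pl_interp \<kappa> N u) \<tau>\<bar>)
         \<le> \<bar>1 / Gamma (1 - \<beta>)\<bar> * (2 * M2 * (1 + 1 / (1 - \<beta>)) * T + 5 * (M1 * (4 + 1 / (1 - \<beta>)))) / \<beta>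
            * \<kappa> powr (2 - \<beta>) * (t - \<kappa>) powr (\<beta> - 1)"
proof -
  define c where "c = \<bar>1 / Gamma (1 - \<beta>)\<bar>"
  have "\<kappa> \<le> T"
    using assms by linarith
  have jump0: "\<bar>pl_jump \<kappa> u 0\<bar> \<le> M1"
    using abs_pl_jump_0_le[OF d1 M1] assms \<open>\<kappa> \<le> T\<close> by blast
  then have "0 \<le> M1"
    by linarith
  have jump: "\<bar>pl_jump \<kappa> u j\<bar> \<le> 2 * M2 * \<kappa>" if "0 < j" "j < N" for j
  proof (rule abs_pl_jump_le[OF d1 d2 M2(1) assms(4) that(1)])
    have "real (Suc j) * \<kappa> \<le> real N * \<kappa>"
      using that assms by (intro mult_right_mono) auto
    then show "real (Suc j) * \<kappa> \<le> T"
      using assms by simp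
  qed
  have "\<bar>pl_interp \<kappa> N (caputo \<beta> (pl_interp \<kappa> N u)) \<tau> - caputo \<beta> (pl_interp \<kappa> N u) \<tau>\<bar>
      \<le> c * (2 * M2 * (1 + 1 / (1 - \<beta>))) * \<kappa> powr (2 - \<beta>)
        + c * (M1 * (4 + 1 / (1 - \<beta>))) * \<kappa>\<^sup>2 * max \<tau> \<kappa> powr (- 1 - \<beta>)" if "\<tau> \<in> {0..t}" for \<tau>
    using pl_interp_caputo_error_le[of \<kappa> N \<beta> \<tau> "2 * M2" u M1] jump0 jump assms M2(2) that
    unfolding c_def by (simp add: algebra_simps)
  then have "integral {0..t} (\<lambda>\<tau>. (t - \<tau>) powr (\<beta> - 1) *
           \<bar>pl_interp \<kappa> N (caputo \<beta> (pl_interp \<kappa> N u)) \<tau> - caputo \<beta> (pl_interp \<kappa> N u) \<tau>\<bar>)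
      \<le> (c * (2 * M2 * (1 + 1 / (1 - \<beta>))) * T + 5 * (c * (M1 * (4 + 1 / (1 - \<beta>))))) / \<beta>
          * \<kappa> powr (2 - \<beta>) * (t - \<kappa>) powr (\<beta> - 1)"
    using assms M2(2) \<open>0 \<le> M1\<close> by (intro integral_weakly_singular_mult_le) (auto simp: c_def)
  then show ?thesis
    unfolding c_def by (simp add: algebra_simps)
qed

theorem lemma5p6:
  fixes \<beta> T :: real and u u' u'' :: "real \<Rightarrow> real"
  assumes "0 < \<beta>" "\<beta> < 1" "0 < T"
    and "\<And>x. x \<in> {0..T} \<Longrightarrow> (u has_real_derivative u' x) (at x within {0..T})"
    and "\<And>x. x \<in> {0..T} \<Longrightarrow> (u' has_real_derivative u'' x) (at x within {0..T})"
    and "continuous_on {0..T} u''"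
  shows "\<exists>C. \<forall>N::nat. N \<ge> 1 \<longrightarrow>
           (let \<kappa> = T / real N;
                uh = pl_interp \<kappa> N u
            in \<forall>t. \<kappa> < t \<and> t \<le> T \<longrightarrow>
                 integral {0..t} (\<lambda>\<tau>. (t - \<tau>) powr (\<beta> - 1) *
                    \<bar>pl_interp \<kappa> N (caputo \<beta> uh) \<tau> - caputo \<beta> uh \<tau>\<bar>)
                 \<le> C * \<kappa> powr (2 - \<beta>) * (t - \<kappa>) powr (\<beta> - 1))"
proof -
  obtain M1 where M1: "\<And>x. x \<in> {0..T} \<Longrightarrow> \<bar>u' x\<bar> \<le> M1"
    using continuous_on_compact_bound[OF compact_Icc DERIV_continuous_on[OF assms(5)]] by auto
  obtain M2 where M2: "\<And>x. x \<in> {0..T} \<Longrightarrow> \<bar>u'' x\<bar> \<le> M2" "0 \<le> M2"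
    using continuous_on_compact_bound[OF compact_Icc assms(6)] by auto
  define C where "C = \<bar>1 / Gamma (1 - \<beta>)\<bar> * (2 * M2 * (1 + 1 / (1 - \<beta>)) * T + 5 * (M1 * (4 + 1 / (1 - \<beta>)))) / \<beta>"
  have "0 < T / real N" "real N * (T / real N) = T" if "1 \<le> N" for N :: nat
    using assms(3) that by auto
  then show ?thesis
    unfolding Let_def
    using pl_interp_caputo_weighted_error_le[OF assms(1,2) _ _ _ _ _ assms(4,5) M1 M2]
    by (intro exI[of _ C]) (simp add: C_def)
qed

end
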